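(* For every $n\ge0$, the map $\mathbf{Dyck}$ restricts to a bijection from the set of compacted binary trees of size $n$ onto the set of C-decorated Dyck paths of length $2n$ (i.e. C-decorated paths ending at $(n,n)$).
   Context: Binary trees are rooted plane trees in which each node is a leaf or an internal node with ordered left and right subtrees; size = number of internal nodes; postorder visits left subtree, right subtree, root. A relaxed binary tree $C$ of size $n$ is obtained from a binary tree $C_*$ with $n$ internal nodes (its spine) by keeping the left-most leaf and turning every other leaf $\ell$ into a pointer to a vertex (internal node or the left-most leaf) preceding $\ell$ in postorder; it is a DAG on the internal nodes and the left-most leaf, each internal node having a left/right out-edge to its child if that child is internal or the left-most leaf, and otherwise to the pointer's target. For a vertex $u$ let $B(u)$ be a single leaf if $u$ is the left-most leaf, and otherwise the binary tree with left/right subtrees $B(v),B(w)$ where $v,w$ are the left/right out-neighbours of $u$. $C$ is compacted if $B(u)\not\cong B(v)$ for all distinct vertices $u,v$. A horizontally decorated path is a lattice path from $(0,0)$ with steps $H=(1,0)$, $V=(0,1)$ in the region $0\le y\le x$, each $H$ step decorated by a number in $\{1,\dots,k+1\}$, $k$ its $y$-coordinate. The map $\mathbf{Dyck}$: label the internal nodes and the left-most leaf of $C_*$ in postorder by $1,\dots,n+1$. Define words recursively by $\mathbf{Path}(\text{leaf})=H$ and $\mathbf{Path}((T_1,T_2))=\mathbf{Path}(T_1)\mathbf{Path}(T_2)V$. The word $\mathbf{Path}(C_* )$ begins with the $H$ of the left-most leaf; removing it gives a path $P_0$ from $(0,0)$ to $(n,n)$ in $0\le y\le x$, whose $H$ steps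 correspond to the non-left-most leaves of $C_*$ (i.e. to pointers). Decorating each $H$ step of $P_0$ with the label of the vertex its pointer points to gives the horizontally decorated path $\mathbf{Dyck}(C)$. C-decorated paths: in a horizontally decorated path, give each $H$ step the label equal to its decoration and each $V$ step the label equal to its final $y$-coordinate plus one; write $\mathcal{L}(S)$ for the label of step $S$. To each $V$ step associate a pair $(v_1,v_2)$: $v_2=\mathcal{L}(S')$ where $S'$ is the step immediately before $V$; for $v_1$, draw the line of slope $1$ from the endpoint of $V$ in the south-west direction until it touches the path again, and let $S''$ be the last step before $V$ whose endpoint lies on this line; set $v_1=\mathcal{L}(S'')$, or $v_1=1$ if there is no such step. A C-decorated path is a horizontally decorated path such that for every occurrence of three consecutive steps $HHV$ whose two $H$ steps have decorations $h_1,h_2$, one has $(h_1,h_2)\ne(v_1,v_2)$ for every $V$ step preceding this occurrence. *)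

theory Defs
  imports Main
begin

datatype btree = Leaf | Node btree btree

text \<open>size = number of internal nodes\<close>
fun internal :: "btree \<Rightarrow> nat" where
  "internal Leaf = 0"
| "internal (Node l r) = internal l + internal r + 1"

datatype letter = HL | VL

fun Path :: "btree \<Rightarrow> letter list" where
  "Path Leaf = [HL]"
| "Path (Node l r) = Path l @ Path r @ [VL]"

text \<open>A relaxed binary tree is a pair (spine, ps) where ps lists, for the non-left-most
leaves of the spine taken in postorder, the label of the vertex the pointer points to.
Vertices (left-most leaf and internal nodes) are labelled 1..n+1 in postorder.
ptr_ok scans the postorder word after the left-most leaf; c = number of labelled
vertices seen so far; a pointer leaf may point to any of these c vertices.\<close>

fun ptr_ok :: "letter list \<Rightarrow> nat list \<Rightarrow> nat \<Rightarrow> bool" where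
  "ptr_ok [] ps c = (ps = [])"
| "ptr_ok (VL # w) ps c = ptr_ok w ps (Suc c)"
| "ptr_ok (HL # w) [] c = False"
| "ptr_ok (HL # w) (p # ps) c = (1 \<le> p \<and> p \<le> c \<and> ptr_ok w ps c)"

definition relaxed :: "btree \<Rightarrow> nat list \<Rightarrow> bool" where
  "relaxed t ps = ptr_ok (tl (Path t)) ps 1"

text \<open>Computation of the trees B(u): traverse the spine in postorder, maintaining the
list env of B(1),...,B(k) of the labelled vertices seen so far. The first leaf
(env empty) is the left-most leaf; every other leaf consumes the next pointer.\<close>

fun Bs :: "btree \<Rightarrow> nat list \<Rightarrow> btree list \<Rightarrow> btree \<times> nat list \<times> btree list" where
  "Bs Leaf ps env =
     (if env = [] then (Leaf, ps, [Leaf])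
      else (case ps of [] \<Rightarrow> (Leaf, [], env) | p # ps' \<Rightarrow> (env ! (p - 1), ps', env)))"
| "Bs (Node l r) ps env =
     (let (bl, ps1, env1) = Bs l ps env;
          (br, ps2, env2) = Bs r ps1 env1
      in (Node bl br, ps2, env2 @ [Node bl br]))"

definition Bvals :: "btree \<Rightarrow> nat list \<Rightarrow> btree list" where
  "Bvals t ps = snd (snd (Bs t ps []))"

definition compacted :: "btree \<Rightarrow> nat list \<Rightarrow> bool" where
  "compacted t ps = distinct (Bvals t ps)"

datatype step = H nat | V

fun nH :: "step list \<Rightarrow> nat" where
  "nH [] = 0"
| "nH (H d # xs) = Suc (nH xs)"
| "nH (V # xs) = nH xs"

fun nV :: "step list \<Rightarrow> nat" where
  "nV [] = 0"
| "nV (H d # xs) = nV xs"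
| "nV (V # xs) = Suc (nV xs)"

definition hdp :: "step list \<Rightarrow> bool" where
  "hdp xs = (\<forall>i < length xs.
      nV (take (Suc i) xs) \<le> nH (take (Suc i) xs) \<and>
      (\<forall>d. xs ! i = H d \<longrightarrow> 1 \<le> d \<and> d \<le> nV (take i xs) + 1))"

text \<open>Label of step i (0-based).\<close>
definition lab :: "step list \<Rightarrow> nat \<Rightarrow> nat" where
  "lab xs i = (case xs ! i of H d \<Rightarrow> d | V \<Rightarrow> nV (take (Suc i) xs) + 1)"

text \<open>x - y at the endpoint of step i: the endpoints on the slope-1 line through the
endpoint of step i are those with the same value.\<close>
definition diagv :: "step list \<Rightarrow> nat \<Rightarrow> int" where
  "diagv xs i = int (nH (take (Suc i) xs)) - int (nV (take (Suc i) xs))"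

definition v2 :: "step list \<Rightarrow> nat \<Rightarrow> nat" where
  "v2 xs i = lab xs (i - 1)"

definition v1 :: "step list \<Rightarrow> nat \<Rightarrow> nat" where
  "v1 xs i = (if \<exists>j < i. diagv xs j = diagv xs i
              then lab xs (GREATEST j. j < i \<and> diagv xs j = diagv xs i)
              else 1)"

definition C_decorated :: "step list \<Rightarrow> bool" where
  "C_decorated xs = (hdp xs \<and>
     (\<forall>i j h1 h2. i < j \<and> j + 2 < length xs \<and> xs ! i = V \<and>
        xs ! j = H h1 \<and> xs ! (j + 1) = H h2 \<and> xs ! (j + 2) = V
        \<longrightarrow> (h1, h2) \<noteq> (v1 xs i, v2 xs i)))"

fun decorate :: "letter list \<Rightarrow> nat list \<Rightarrow> step list" where
  "decorate [] ps = []"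
| "decorate (VL # w) ps = V # decorate w ps"
| "decorate (HL # w) [] = H 0 # decorate w []"
| "decorate (HL # w) (p # ps) = H p # decorate w ps"

definition Dyck :: "btree \<times> nat list \<Rightarrow> step list" where
  "Dyck C = decorate (tl (Path (fst C))) (snd C)"

end

theory Submission
  imports Defs
begin

text \<open>
  A relaxed tree is determined by its postorder word \<^const>\<open>Path\<close>, which can be parsed back
  with a stack, together with its pointers; the ballot property of the word and the range of the
  pointers are exactly the two conditions of a horizontally decorated path, so \<^const>\<open>Dyck\<close> is
  a bijection from relaxed trees of size n onto horizontally decorated Dyck paths.

  The values B(1), ..., B(n+1) are computed by reading the path with a stack: H d pushes B(d) and
  V replaces the two top entries l, r by the new vertex value Node l r. The stack entry at height p
  is the value of the last step ending on the diagonal x - y = p, so the vertex created by a V step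
  is Node B(v1) B(v2). As every value is built from earlier ones, the values are pairwise distinct
  iff the pairs (v1, v2) of the V steps are. Finally, a V step that does not end an occurrence of
  HHV has a freshly created label in its pair, so only such occurrences can repeat an earlier pair,
  which is what the C-condition forbids.
\<close>

lemma count_Path: "count_list (Path t) HL = Suc (internal t)" "count_list (Path t) VL = internal t"
  by (induction t) auto

lemma Path_eq_HL_Cons_tl: "Path t = HL # tl (Path t)"
  by (induction t) (simp_all, metis append_Cons list.sel(3))

lemma count_take_Path_less:
  "0 < k \<Longrightarrow> count_list (take k (Path t)) VL < count_list (take k (Path t)) HL"
proof (induction t arbitrary: k)
  case Leaf
  then show ?case by (cases k) auto
next
  case (Node l r)
  show ?case
  proof (cases "k \<le> length (Path l)")
    case True
    then show ?thesis using Node by simp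
  next
    case False
    define k' where "k' = k - length (Path l)"
    show ?thesis
    proof (cases "k' \<le> length (Path r)")
      case True
      have "0 < k'" using False unfolding k'_def by simp
      then show ?thesis
        using Node.IH(2)[of k'] count_Path[of l] True False unfolding k'_def by simp
    next
      case False
      then have "take k (Path (Node l r)) = Path (Node l r)" unfolding k'_def by simp
      then show ?thesis using count_Path[of "Node l r"] by simp
    qed
  qed
qed

definition ballot :: "letter list \<Rightarrow> bool" where
  "ballot w \<longleftrightarrow> (\<forall>k. count_list (take k w) VL \<le> count_list (take k w) HL)"

lemma ballot_tl_Path: "ballot (tl (Path t))"
  unfolding ballot_def
proof
  fix k
  have "count_list (take (Suc k) (Path t)) VL < count_list (take (Suc k) (Path t)) HL"
    by (rule count_take_Path_less) simp
  then show "count_list (take k (tl (Path t))) VL \<le> count_list (take k (tl (Path t))) HL"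
    by (subst (asm) (1 2) Path_eq_HL_Cons_tl) simp
qed

lemma ballot_iff_prefixes:
  "ballot w \<longleftrightarrow> (\<forall>k \<le> length w. count_list (take k w) VL \<le> count_list (take k w) HL)"
  unfolding ballot_def by (metis nat_le_linear order_refl take_all)

fun parse :: "letter list \<Rightarrow> btree list \<Rightarrow> btree list" where
  "parse [] S = S"
| "parse (HL # w) S = parse w (Leaf # S)"
| "parse (VL # w) (r # l # S) = parse w (Node l r # S)"
| "parse (VL # w) _ = []"

lemma parse_Path: "parse (Path t @ w) S = parse w (t # S)"
  by (induction t arbitrary: w S) auto

lemma inj_Path: "inj Path"
proof
  fix t t' assume "Path t = Path t'"
  then show "t = t'" using parse_Path[of t "[]" "[]"] parse_Path[of t' "[]" "[]"] by simp
qed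

lemma parse_concat_Path:
  assumes "\<And>k. count_list (take k w) VL < count_list (take k w) HL + length S"
  shows "concat (map Path (rev (parse w S))) = concat (map Path (rev S)) @ w
    \<and> length (parse w S) + count_list w VL = length S + count_list w HL"
  using assms
proof (induction w arbitrary: S)
  case Nil
  then show ?case by simp
next
  case (Cons a w)
  note prefix_bound = Cons.prems[of "Suc k" for k]
  show ?case
  proof (cases a)
    case HL
    then show ?thesis using Cons.IH[of "Leaf # S"] prefix_bound by simp
  next
    case VL
    then obtain r l S' where S: "S = r # l # S'"
    proof -
      have "2 \<le> length S" using Cons.prems[of 1] VL by simp
      then show thesis using that by (auto simp: numeral_2_eq_2 Suc_le_length_iff)
    qed
    then show ?thesis using Cons.IH[of "Node l r # S'"] prefix_bound VL by simp
  qed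
qed

lemma Path_of_ballot:
  assumes "ballot w" "count_list w VL = count_list w HL"
  obtains t where "Path t = HL # w"
proof -
  have "count_list (take k w) VL < count_list (take k w) HL + length [Leaf]" for k
    using assms(1) unfolding ballot_def by (simp add: le_imp_less_Suc)
  from parse_concat_Path[OF this] assms(2) obtain t where "parse w [Leaf] = [t]" "Path t = HL # w"
    by (cases "parse w [Leaf]") auto
  then show thesis using that by blast
qed

section \<open>Relaxed trees and horizontally decorated paths\<close>

fun letter_of :: "step \<Rightarrow> letter" where
  "letter_of (H d) = HL"
| "letter_of V = VL"

fun decorations :: "step list \<Rightarrow> nat list" where
  "decorations [] = []"
| "decorations (H d # xs) = d # decorations xs"
| "decorations (V # xs) = decorations xs"

lemma map_letter_of_decorate [simp]: "map letter_of (decorate w ps) = w"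
  by (induction w ps rule: decorate.induct) auto

lemma decorations_decorate: "length ps = count_list w HL \<Longrightarrow> decorations (decorate w ps) = ps"
  by (induction w ps rule: decorate.induct) auto

lemma decorate_decorations [simp]: "decorate (map letter_of xs) (decorations xs) = xs"
  by (induction xs rule: decorations.induct) auto

lemma decorate_append: "decorate (u @ w) ps = decorate u ps @ decorate w (drop (count_list u HL) ps)"
  by (induction u ps rule: decorate.induct) auto

lemma nH_eq_count_list: "nH xs = count_list (map letter_of xs) HL"
  by (induction xs rule: nH.induct) auto

lemma nV_eq_count_list: "nV xs = count_list (map letter_of xs) VL"
  by (induction xs rule: nV.induct) auto

lemma length_ptr_ok: "ptr_ok w ps c \<Longrightarrow> length ps = count_list w HL"
  by (induction w ps c rule: ptr_ok.induct) auto

lemma ptr_ok_decorations_iff: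
  "ptr_ok (map letter_of xs) (decorations xs) c \<longleftrightarrow>
     (\<forall>i < length xs. \<forall>d. xs ! i = H d \<longrightarrow> 1 \<le> d \<and> d \<le> nV (take i xs) + c)"
proof (induction xs arbitrary: c)
  case Nil
  then show ?case by simp
next
  case (Cons x xs)
  then show ?case by (cases x) (auto simp: All_less_Suc2)
qed

lemma hdp_iff_ballot_ptr_ok:
  "hdp xs \<longleftrightarrow> ballot (map letter_of xs) \<and> ptr_ok (map letter_of xs) (decorations xs) 1"
proof -
  have "ballot (map letter_of xs) \<longleftrightarrow> (\<forall>k < Suc (length xs). nV (take k xs) \<le> nH (take k xs))"
    unfolding ballot_iff_prefixes nV_eq_count_list nH_eq_count_list
    by (simp add: take_map less_Suc_eq_le)
  then show ?thesis unfolding hdp_def ptr_ok_decorations_iff All_less_Suc2 by auto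
qed

lemma letters_Dyck: "map letter_of (Dyck (t, ps)) = tl (Path t)"
  by (simp add: Dyck_def)

lemma decorations_Dyck: "relaxed t ps \<Longrightarrow> decorations (Dyck (t, ps)) = ps"
  unfolding relaxed_def Dyck_def by (auto dest: length_ptr_ok intro: decorations_decorate)

lemma relaxed_iff_hdp_Dyck: "relaxed t ps \<longleftrightarrow> hdp (Dyck (t, ps)) \<and> decorations (Dyck (t, ps)) = ps"
  using ballot_tl_Path[of t] decorations_Dyck[of t ps]
  unfolding hdp_iff_ballot_ptr_ok letters_Dyck relaxed_def by auto

lemma count_tl_Path: "count_list (tl (Path t)) HL = internal t" "count_list (tl (Path t)) VL = internal t"
proof -
  have "count_list (HL # tl (Path t)) y = count_list (Path t) y" for y
    by (simp only: Path_eq_HL_Cons_tl[symmetric])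
  from this[of HL] this[of VL]
  show "count_list (tl (Path t)) HL = internal t" "count_list (tl (Path t)) VL = internal t"
    using count_Path[of t] by simp_all
qed

lemma counts_Dyck: "nH (Dyck (t, ps)) = internal t" "nV (Dyck (t, ps)) = internal t"
  unfolding nH_eq_count_list nV_eq_count_list letters_Dyck by (rule count_tl_Path)+

lemma bij_betw_Dyck_relaxed:
  "bij_betw Dyck {(t, ps). internal t = n \<and> relaxed t ps} {xs. hdp xs \<and> nH xs = n \<and> nV xs = n}"
  unfolding bij_betw_def
proof (intro conjI subset_antisym subsetI)
  show "inj_on Dyck {(t, ps). internal t = n \<and> relaxed t ps}"
  proof (rule inj_onI, clarify)
    fix t ps t' ps'
    assume "relaxed t ps" "relaxed t' ps'" and same: "Dyck (t, ps) = Dyck (t', ps')"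
    then have "ps = ps'" by (metis decorations_Dyck)
    have "tl (Path t) = tl (Path t')" using same by (metis letters_Dyck)
    then have "Path t = Path t'" by (metis Path_eq_HL_Cons_tl)
    with \<open>ps = ps'\<close> show "t = t' \<and> ps = ps'" using inj_Path by (simp add: inj_eq)
  qed
next
  fix xs assume "xs \<in> Dyck ` {(t, ps). internal t = n \<and> relaxed t ps}"
  then show "xs \<in> {xs. hdp xs \<and> nH xs = n \<and> nV xs = n}"
    using relaxed_iff_hdp_Dyck counts_Dyck by auto
next
  fix xs assume "xs \<in> {xs. hdp xs \<and> nH xs = n \<and> nV xs = n}"
  then have xs: "hdp xs" "nH xs = n" "nV xs = n" by auto
  then obtain t where t: "Path t = HL # map letter_of xs"
    using Path_of_ballot unfolding hdp_iff_ballot_ptr_ok nH_eq_count_list nV_eq_count_list by metis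
  have "Dyck (t, decorations xs) = xs" using t by (simp add: Dyck_def)
  moreover have "relaxed t (decorations xs)"
    using xs(1) t unfolding hdp_iff_ballot_ptr_ok relaxed_def by simp
  moreover have "internal t = n"
    using count_Path(2)[of t] t xs(3) unfolding nV_eq_count_list by simp
  ultimately show "xs \<in> Dyck ` {(t, ps). internal t = n \<and> relaxed t ps}" by force
qed

section \<open>Computing the vertex values along the path\<close>

text \<open>The second component accumulates B(1), B(2), ...; the last equation is a junk case
  that never applies on a horizontally decorated path.\<close>

fun eval_steps :: "step list \<Rightarrow> btree list \<times> btree list \<Rightarrow> btree list \<times> btree list" where
  "eval_steps [] st = st"
| "eval_steps (H d # xs) (S, E) = eval_steps xs (E ! (d - 1) # S, E)"
| "eval_steps (V # xs) (r # l # S, E) = eval_steps xs (Node l r # S, E @ [Node l r])"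
| "eval_steps (V # xs) st = eval_steps xs st"

lemma eval_steps_append: "eval_steps (xs @ ys) st = eval_steps ys (eval_steps xs st)"
  by (induction xs st rule: eval_steps.induct) auto

lemma eval_steps_extends_values: "\<exists>X. snd (eval_steps xs st) = snd st @ X"
proof (induction xs st rule: eval_steps.induct)
  case (3 xs r l S E)
  then obtain X where "snd (eval_steps xs (Node l r # S, E @ [Node l r])) = (E @ [Node l r]) @ X"
    by auto
  then show ?case by auto
qed auto

text \<open>The left-most leaf behaves like a pointer to itself once B(1) = Leaf is recorded.\<close>

lemma Bs_Nil_env: "Bs t ps [] = Bs t (1 # ps) [Leaf]"
  by (induction t arbitrary: ps) auto

lemma eval_steps_Bs:
  "E \<noteq> [] \<Longrightarrow> count_list (Path t) HL \<le> length ps \<Longrightarrow> Bs t ps E = (B, ps', E') \<Longrightarrow>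
   ps' = drop (count_list (Path t) HL) ps \<and> E' \<noteq> [] \<and>
   eval_steps (decorate (Path t) ps @ rest) (S, E) = eval_steps rest (B # S, E')"
proof (induction t arbitrary: ps E B ps' E' rest S)
  case Leaf
  then show ?case by (cases ps) auto
next
  case (Node l r)
  obtain bl ps1 E1 where l: "Bs l ps E = (bl, ps1, E1)" by (metis prod.exhaust)
  obtain br ps2 E2 where r: "Bs r ps1 E1 = (br, ps2, E2)" by (metis prod.exhaust)
  have B: "B = Node bl br" "ps' = ps2" "E' = E2 @ [Node bl br]"
    using Node.prems(3) l r by auto
  note IHl = Node.IH(1)[OF Node.prems(1) _ l]
  note IHr = Node.IH(2)[OF conjunct1[OF conjunct2[OF IHl]] _ r]
  show ?case using Node.prems(2) IHl IHr B by (simp add: decorate_append eval_steps_append drop_drop add.commute)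
qed

definition vertex_values :: "step list \<Rightarrow> btree list" where
  "vertex_values xs = snd (eval_steps xs ([Leaf], [Leaf]))"

lemma Bvals_eq_vertex_values:
  assumes "relaxed t ps"
  shows "Bvals t ps = vertex_values (Dyck (t, ps))"
proof -
  obtain B ps' E' where B: "Bs t (1 # ps) [Leaf] = (B, ps', E')" by (metis prod.exhaust)
  have "count_list (Path t) HL \<le> length (1 # ps)"
    using length_ptr_ok[of "tl (Path t)" ps 1] assms unfolding relaxed_def
    by (subst Path_eq_HL_Cons_tl) simp
  moreover have "decorate (Path t) (1 # ps) = H 1 # Dyck (t, ps)"
    unfolding Dyck_def by (subst Path_eq_HL_Cons_tl) simp
  ultimately have "eval_steps (H 1 # Dyck (t, ps)) ([], [Leaf]) = ([B], E')"
    using eval_steps_Bs[of "[Leaf]" t "1 # ps" B ps' E' "[]" "[]"] B by simp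
  then show ?thesis using B unfolding Bvals_def vertex_values_def Bs_Nil_env by simp
qed

section \<open>The stack on a horizontally decorated path\<close>

lemma nV_take_Suc: "k < length xs \<Longrightarrow> nV (take (Suc k) xs) = nV (take k xs) + (if xs ! k = V then 1 else 0)"
  by (cases "xs ! k") (auto simp: take_Suc_conv_app_nth nV_eq_count_list)

lemma nH_take_Suc: "k < length xs \<Longrightarrow> nH (take (Suc k) xs) = nH (take k xs) + (if xs ! k = V then 0 else 1)"
  by (cases "xs ! k") (auto simp: take_Suc_conv_app_nth nH_eq_count_list)

lemma nV_take_mono: "k \<le> k' \<Longrightarrow> nV (take k xs) \<le> nV (take k' xs)"
  unfolding nV_eq_count_list
  by (metis count_list_append le_add1 le_add_diff_inverse take_add take_map)

lemma hdp_prefix_le: "hdp xs \<Longrightarrow> k \<le> length xs \<Longrightarrow> nV (take k xs) \<le> nH (take k xs)"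
  unfolding hdp_def by (cases k) auto

lemma hdp_nth_0_not_V: "hdp xs \<Longrightarrow> 0 < length xs \<Longrightarrow> xs ! 0 \<noteq> V"
  using hdp_prefix_le[of xs 1] by (cases xs) auto

definition height :: "step list \<Rightarrow> nat \<Rightarrow> nat" where
  "height xs k = nH (take k xs) - nV (take k xs)"

lemma height_Suc_H:
  "hdp xs \<Longrightarrow> k < length xs \<Longrightarrow> xs ! k = H d \<Longrightarrow> height xs (Suc k) = Suc (height xs k)"
  using hdp_prefix_le[of xs k] nV_take_Suc[of k xs] nH_take_Suc[of k xs] unfolding height_def by simp

lemma height_Suc_V:
  "hdp xs \<Longrightarrow> k < length xs \<Longrightarrow> xs ! k = V \<Longrightarrow> height xs k = Suc (height xs (Suc k))"
  using hdp_prefix_le[of xs "Suc k"] nV_take_Suc[of k xs] nH_take_Suc[of k xs]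
  unfolding height_def by simp

lemma diagv_eq_height: "hdp xs \<Longrightarrow> j < length xs \<Longrightarrow> diagv xs j = int (height xs (Suc j))"
  using hdp_prefix_le[of xs "Suc j"] unfolding height_def diagv_def by simp

lemma lab_bounds: "hdp xs \<Longrightarrow> j < length xs \<Longrightarrow> 1 \<le> lab xs j \<and> lab xs j \<le> Suc (nV (take (Suc j) xs))"
  using nV_take_Suc[of j xs] unfolding lab_def hdp_def by (cases "xs ! j") auto

lemma lab_V: "j < length xs \<Longrightarrow> xs ! j = V \<Longrightarrow> lab xs j = Suc (Suc (nV (take j xs)))"
  using nV_take_Suc[of j xs] unfolding lab_def by simp

text \<open>The default 1 is the label of the left-most leaf, where the path starts at height 0.\<close>

definition last_label :: "step list \<Rightarrow> nat \<Rightarrow> nat \<Rightarrow> nat" where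
  "last_label xs k p =
     (if \<exists>j < k. height xs (Suc j) = p then lab xs (GREATEST j. j < k \<and> height xs (Suc j) = p) else 1)"

lemma last_label_0 [simp]: "last_label xs 0 p = 1"
  unfolding last_label_def by simp

lemma last_label_Suc:
  "last_label xs (Suc k) p = (if height xs (Suc k) = p then lab xs k else last_label xs k p)"
proof (cases "height xs (Suc k) = p")
  case True
  then have "(GREATEST j. j < Suc k \<and> height xs (Suc j) = p) = k"
    by (intro Greatest_equality) auto
  then show ?thesis using True unfolding last_label_def by auto
next
  case False
  then have "(\<lambda>j. j < Suc k \<and> height xs (Suc j) = p) = (\<lambda>j. j < k \<and> height xs (Suc j) = p)"
    using less_Suc_eq by auto
  moreover from this have "(\<exists>j < Suc k. height xs (Suc j) = p) \<longleftrightarrow> (\<exists>j < k. height xs (Suc j) = p)"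
    by metis
  ultimately show ?thesis using False unfolding last_label_def by (simp; blast)
qed

lemma last_label_bounds:
  "hdp xs \<Longrightarrow> k \<le> length xs \<Longrightarrow> 1 \<le> last_label xs k p \<and> last_label xs k p \<le> Suc (nV (take k xs))"
proof (induction k)
  case (Suc k)
  then show ?case
    using lab_bounds[of xs k] nV_take_mono[of k "Suc k" xs] by (auto simp: last_label_Suc)
qed simp

lemma v1_eq_last_label:
  assumes "hdp xs" "k < length xs" "xs ! k = V"
  shows "v1 xs k = last_label xs k (height xs (Suc k))"
proof -
  have "j < k \<Longrightarrow> diagv xs j = diagv xs k \<longleftrightarrow> height xs (Suc j) = height xs (Suc k)" for j
    using diagv_eq_height[OF assms(1)] assms(2) by simp
  then have "j < k \<and> diagv xs j = diagv xs k \<longleftrightarrow> j < k \<and> height xs (Suc j) = height xs (Suc k)" for j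
    by blast
  then show ?thesis unfolding v1_def last_label_def by presburger
qed

lemma v2_eq_last_label:
  assumes "hdp xs" "k < length xs" "xs ! k = V"
  shows "v2 xs k = last_label xs k (height xs k)"
proof -
  obtain j where "k = Suc j" using hdp_nth_0_not_V assms by (cases k) auto
  then show ?thesis unfolding v2_def by (simp add: last_label_Suc)
qed

definition stack :: "step list \<Rightarrow> btree list \<Rightarrow> nat \<Rightarrow> btree list" where
  "stack xs E k = map (\<lambda>p. E ! (last_label xs k p - 1)) (rev [0..<Suc (height xs k)])"

lemma stack_Suc_height:
  "height xs k = Suc h \<Longrightarrow>
   stack xs E k = E ! (last_label xs k (Suc h) - 1) # E ! (last_label xs k h - 1) #
     map (\<lambda>p. E ! (last_label xs k p - 1)) (rev [0..<h])"
  unfolding stack_def by simp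

lemma eval_steps_take:
  assumes "hdp xs" "k \<le> length xs"
  shows "\<exists>E. eval_steps (take k xs) ([Leaf], [Leaf]) = (stack xs E k, E) \<and> length E = Suc (nV (take k xs))"
  using assms(2)
proof (induction k)
  case 0
  then show ?case by (simp add: stack_def height_def)
next
  case (Suc k)
  then have k: "k < length xs" by simp
  from Suc obtain E where E: "eval_steps (take k xs) ([Leaf], [Leaf]) = (stack xs E k, E)"
    and len: "length E = Suc (nV (take k xs))" by auto
  have step: "eval_steps (take (Suc k) xs) ([Leaf], [Leaf]) = eval_steps [xs ! k] (stack xs E k, E)"
    using E k by (simp add: take_Suc_conv_app_nth eval_steps_append)
  show ?case
  proof (cases "xs ! k")
    case (H d)
    have "stack xs E (Suc k) = E ! (d - 1) # stack xs E k"
      using height_Suc_H[OF assms(1) k H] H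
      by (auto simp: stack_def last_label_Suc lab_def)
    then show ?thesis using step len H nV_take_Suc[OF k] by simp
  next
    case V
    define h where "h = height xs (Suc k)"
    have hk: "height xs k = Suc h" using height_Suc_V[OF assms(1) k V] h_def by simp
    define N where "N = Node (E ! (last_label xs k h - 1)) (E ! (last_label xs k (Suc h) - 1))"
    have "eval_steps [xs ! k] (stack xs E k, E) =
        (N # map (\<lambda>p. E ! (last_label xs k p - 1)) (rev [0..<h]), E @ [N])"
      using V stack_Suc_height[OF hk] N_def by simp
    moreover have "last_label xs (Suc k) h = Suc (length E)"
      using lab_V[OF k V] len h_def by (simp add: last_label_Suc)
    moreover have "last_label xs k p - 1 < length E" for p
      using last_label_bounds[OF assms(1), of k p] k len by (simp, linarith)
    ultimately have "eval_steps [xs ! k] (stack xs E k, E) = (stack xs (E @ [N]) (Suc k), E @ [N])"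
      unfolding stack_def h_def[symmetric] by (simp add: nth_append last_label_Suc h_def)
    then show ?thesis using step len V nV_take_Suc[OF k] by simp
  qed
qed

lemma v1_v2_bounds:
  assumes "hdp xs" "i < length xs" "xs ! i = V"
  shows "1 \<le> v1 xs i \<and> v1 xs i \<le> Suc (nV (take i xs)) \<and>
         1 \<le> v2 xs i \<and> v2 xs i \<le> Suc (nV (take i xs))"
  using last_label_bounds[OF assms(1)] assms(2)
  unfolding v1_eq_last_label[OF assms] v2_eq_last_label[OF assms] by simp

lemma vertex_values_0: "vertex_values xs ! 0 = Leaf"
  using eval_steps_extends_values[of xs "([Leaf], [Leaf])"] unfolding vertex_values_def by auto

lemma length_vertex_values: "hdp xs \<Longrightarrow> length (vertex_values xs) = Suc (nV xs)"
  using eval_steps_take[of xs "length xs"] unfolding vertex_values_def by auto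

lemma vertex_values_V:
  assumes "hdp xs" "i < length xs" "xs ! i = V"
  shows "vertex_values xs ! nV (take (Suc i) xs) =
           Node (vertex_values xs ! (v1 xs i - 1)) (vertex_values xs ! (v2 xs i - 1))"
proof -
  obtain E where E: "eval_steps (take i xs) ([Leaf], [Leaf]) = (stack xs E i, E)"
    and len: "length E = Suc (nV (take i xs))"
    using eval_steps_take[OF assms(1), of i] assms(2) by auto
  have "height xs i = Suc (height xs (Suc i))" using height_Suc_V[OF assms] .
  then have "snd (eval_steps (take (Suc i) xs) ([Leaf], [Leaf])) = E @ [Node (E ! (v1 xs i - 1)) (E ! (v2 xs i - 1))]"
    using E assms(2,3) stack_Suc_height
    by (simp add: take_Suc_conv_app_nth eval_steps_append v1_eq_last_label[OF assms] v2_eq_last_label[OF assms])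
  moreover obtain X where "vertex_values xs = snd (eval_steps (take (Suc i) xs) ([Leaf], [Leaf])) @ X"
    using eval_steps_extends_values[of "drop (Suc i) xs"] eval_steps_append[of "take (Suc i) xs" "drop (Suc i) xs"]
    unfolding vertex_values_def by fastforce
  moreover have "v1 xs i - 1 < length E" "v2 xs i - 1 < length E"
    using v1_v2_bounds[OF assms] len by auto
  ultimately show ?thesis using len nV_take_Suc[OF assms(2)] assms(3) by (simp add: nth_append)
qed

section \<open>Compactness and the C-condition\<close>

lemma nth_eq_imp_eq_if_inj_on_children:
  assumes leaf: "E ! 0 = Leaf" and c: "bij_betw c I {1..<length E}"
    and node: "\<And>i. i \<in> I \<Longrightarrow> a i < c i \<and> b i < c i \<and> E ! c i = Node (E ! a i) (E ! b i)"
    and inj: "inj_on (\<lambda>i. (a i, b i)) I"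
  shows "x < length E \<Longrightarrow> y < length E \<Longrightarrow> E ! x = E ! y \<Longrightarrow> x = y"
proof (induction "x + y" arbitrary: x y rule: less_induct)
  case less
  have is_node: "\<exists>i \<in> I. z = c i" if "0 < z" "z < length E" for z
    using that c by (auto simp: bij_betw_def)
  have not_leaf: "E ! z \<noteq> Leaf" if "0 < z" "z < length E" for z
    using is_node[OF that] node by fastforce
  show ?case
  proof (cases "x = 0 \<or> y = 0")
    case True
    then have "E ! x = Leaf" "E ! y = Leaf" using less.prems(3) leaf by auto
    then have "\<not> 0 < x" "\<not> 0 < y" using not_leaf less.prems(1,2) by auto
    then show ?thesis by simp
  next
    case False
    then obtain i j where ij: "i \<in> I" "j \<in> I" "x = c i" "y = c j"
      using is_node less.prems by blast
    then have "E ! a i = E ! a j" "E ! b i = E ! b j" using node less.prems(3) by auto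
    moreover have "a i < x" "a j < y" "b i < x" "b j < y" using node ij by auto
    moreover have "x < length E" "y < length E" using less.prems by auto
    ultimately have "a i = a j" "b i = b j"
      using less.hyps[of "a i" "a j"] less.hyps[of "b i" "b j"] by simp_all
    then have "i = j" using inj_onD[OF inj _ ij(1,2)] by simp
    then show ?thesis using ij by simp
  qed
qed

lemma distinct_iff_inj_on_children:
  assumes leaf: "E ! 0 = Leaf" and c: "bij_betw c I {1..<length E}"
    and node: "\<And>i. i \<in> I \<Longrightarrow> a i < c i \<and> b i < c i \<and> E ! c i = Node (E ! a i) (E ! b i)"
  shows "distinct E \<longleftrightarrow> inj_on (\<lambda>i. (a i, b i)) I"
proof
  assume "distinct E"
  show "inj_on (\<lambda>i. (a i, b i)) I"
  proof (rule inj_onI)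
    fix i j assume ij: "i \<in> I" "j \<in> I" "(a i, b i) = (a j, b j)"
    then have "E ! c i = E ! c j" using node by simp
    moreover have "c i < length E" "c j < length E" using ij c by (auto dest: bij_betw_apply)
    ultimately have "c i = c j" using \<open>distinct E\<close> by (simp add: nth_eq_iff_index_eq)
    then show "i = j" using ij c by (auto dest: bij_betw_imp_inj_on inj_onD)
  qed
next
  assume "inj_on (\<lambda>i. (a i, b i)) I"
  then show "distinct E"
    using nth_eq_imp_eq_if_inj_on_children[OF leaf c node] unfolding distinct_conv_nth by blast
qed

lemma count_V_reached:
  "k \<le> length xs \<Longrightarrow> 1 \<le> m \<Longrightarrow> m \<le> nV (take k xs) \<Longrightarrow>
   \<exists>i < k. xs ! i = V \<and> nV (take (Suc i) xs) = m"
proof (induction k)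
  case (Suc k)
  show ?case
  proof (cases "m \<le> nV (take k xs)")
    case True
    then show ?thesis using Suc by (auto intro: less_SucI)
  next
    case False
    then show ?thesis using Suc.prems nV_take_Suc[of k xs] by (auto split: if_splits)
  qed
qed simp

lemma bij_betw_V_steps:
  "bij_betw (\<lambda>i. nV (take (Suc i) xs)) {i. i < length xs \<and> xs ! i = V} {1..<Suc (nV xs)}"
  unfolding bij_betw_def
proof (intro conjI subset_antisym)
  show "inj_on (\<lambda>i. nV (take (Suc i) xs)) {i. i < length xs \<and> xs ! i = V}"
  proof (rule linorder_inj_onI')
    fix i j assume "i \<in> {i. i < length xs \<and> xs ! i = V}" "j \<in> {i. i < length xs \<and> xs ! i = V}" "i < j"
    then have "nV (take (Suc i) xs) \<le> nV (take j xs)" "nV (take j xs) < nV (take (Suc j) xs)"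
      using nV_take_mono[of "Suc i" j xs] nV_take_Suc[of j xs] by auto
    then show "nV (take (Suc i) xs) \<noteq> nV (take (Suc j) xs)" by simp
  qed
  show "(\<lambda>i. nV (take (Suc i) xs)) ` {i. i < length xs \<and> xs ! i = V} \<subseteq> {1..<Suc (nV xs)}"
  proof (rule image_subsetI)
    fix i assume "i \<in> {i. i < length xs \<and> xs ! i = V}"
    then show "nV (take (Suc i) xs) \<in> {1..<Suc (nV xs)}"
      using nV_take_Suc[of i xs] nV_take_mono[of "Suc i" "length xs" xs] by simp
  qed
  show "{1..<Suc (nV xs)} \<subseteq> (\<lambda>i. nV (take (Suc i) xs)) ` {i. i < length xs \<and> xs ! i = V}"
  proof
    fix m assume "m \<in> {1..<Suc (nV xs)}"
    then obtain i where "i < length xs" "xs ! i = V" "m = nV (take (Suc i) xs)"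
      using count_V_reached[of "length xs" xs m] by auto
    then show "m \<in> (\<lambda>i. nV (take (Suc i) xs)) ` {i. i < length xs \<and> xs ! i = V}" by blast
  qed
qed

lemma distinct_vertex_values_iff:
  assumes "hdp xs"
  shows "distinct (vertex_values xs) \<longleftrightarrow>
           inj_on (\<lambda>i. (v1 xs i, v2 xs i)) {i. i < length xs \<and> xs ! i = V}"
proof -
  let ?VS = "{i. i < length xs \<and> xs ! i = V}"
  have "distinct (vertex_values xs) \<longleftrightarrow> inj_on (\<lambda>i. (v1 xs i - 1, v2 xs i - 1)) ?VS"
  proof (rule distinct_iff_inj_on_children)
    show "bij_betw (\<lambda>i. nV (take (Suc i) xs)) ?VS {1..<length (vertex_values xs)}"
      using bij_betw_V_steps length_vertex_values[OF assms] by simp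
    fix i assume "i \<in> ?VS"
    then show "v1 xs i - 1 < nV (take (Suc i) xs) \<and> v2 xs i - 1 < nV (take (Suc i) xs) \<and>
        vertex_values xs ! nV (take (Suc i) xs) =
          Node (vertex_values xs ! (v1 xs i - 1)) (vertex_values xs ! (v2 xs i - 1))"
      using v1_v2_bounds[OF assms] vertex_values_V[OF assms] nV_take_Suc[of i xs] by fastforce
  qed (rule vertex_values_0)
  also have "\<dots> \<longleftrightarrow> inj_on (\<lambda>i. (v1 xs i, v2 xs i)) ?VS"
  proof -
    have "(v1 xs i - 1, v2 xs i - 1) = (v1 xs j - 1, v2 xs j - 1) \<longleftrightarrow> (v1 xs i, v2 xs i) = (v1 xs j, v2 xs j)"
      if "i \<in> ?VS" "j \<in> ?VS" for i j
      using v1_v2_bounds[OF assms, of i] v1_v2_bounds[OF assms, of j] that by auto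
    then show ?thesis unfolding inj_on_def by blast
  qed
  finally show ?thesis .
qed

lemma v1_after_H:
  assumes "hdp xs" "Suc (Suc b) < length xs" "xs ! Suc b = H h" "xs ! Suc (Suc b) = V"
  shows "v1 xs (Suc (Suc b)) = lab xs b"
proof -
  have "height xs (Suc (Suc (Suc b))) = height xs (Suc b)"
    using height_Suc_V[OF assms(1,2,4)] height_Suc_H[OF assms(1) _ assms(3)] assms(2) by simp
  then show ?thesis
    using height_Suc_H[OF assms(1) _ assms(3)] assms(2)
    by (simp add: v1_eq_last_label[OF assms(1,2,4)] last_label_Suc)
qed

lemma v2_Suc: "v2 xs (Suc c) = lab xs c"
  unfolding v2_def by simp

lemma v1_v2_less_lab_V:
  assumes "hdp xs" "i \<le> c" "c < length xs" "xs ! i = V" "xs ! c = V"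
  shows "v1 xs i < lab xs c" "v2 xs i < lab xs c"
  using v1_v2_bounds[OF assms(1) _ assms(4)] nV_take_mono[OF assms(2), of xs] lab_V[OF assms(3,5)] assms(2,3)
  by auto

lemma v1_v2_HHV:
  assumes "hdp xs" "Suc (Suc j) < length xs"
    and "xs ! j = H h1" "xs ! Suc j = H h2" "xs ! Suc (Suc j) = V"
  shows "(v1 xs (Suc (Suc j)), v2 xs (Suc (Suc j))) = (h1, h2)"
  using v1_after_H[OF assms(1,2,4,5)] assms(3,4) v2_Suc by (simp add: lab_def)

text \<open>A V step preceded by V, or by V H, has in its pair the label of that V step, which exceeds
  every label occurring in the pair of an earlier V step.\<close>

lemma repeated_v_pair_ends_HHV:
  assumes hdp: "hdp xs" and i: "xs ! i = V" and i': "i' < length xs" "xs ! i' = V" "i < i'"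
    and same: "v1 xs i = v1 xs i'" "v2 xs i = v2 xs i'"
  obtains b h1 h2 where "i < b" "i' = Suc (Suc b)" "xs ! b = H h1" "xs ! Suc b = H h2"
proof -
  obtain c where c: "i' = Suc c" "i \<le> c" using i'(3) by (cases i') auto
  have "xs ! c \<noteq> V"
  proof
    assume "xs ! c = V"
    then have "v2 xs i < lab xs c" using v1_v2_less_lab_V(2)[OF hdp c(2) _ i] c i' by simp
    then show False using same(2) v2_Suc c(1) by simp
  qed
  then obtain h2 where h2: "xs ! c = H h2" by (cases "xs ! c") auto
  then have "i \<noteq> c" using i by auto
  with c obtain b where b: "c = Suc b" "i \<le> b" by (cases c) auto
  have "xs ! b \<noteq> V"
  proof
    assume "xs ! b = V"
    then have "v1 xs i < lab xs b" using v1_v2_less_lab_V(1)[OF hdp b(2) _ i] b c i' by simp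
    moreover have "v1 xs i' = lab xs b"
      using v1_after_H[OF hdp _ h2[unfolded b] i'(2)[unfolded c b]] i'(1) b c by simp
    ultimately show False using same(1) by simp
  qed
  then obtain h1 where h1: "xs ! b = H h1" by (cases "xs ! b") auto
  with b i have "i < b" by (cases "i = b") auto
  then show thesis using that h1 h2 b c by simp
qed

lemma inj_on_v_pairs_iff_C_decorated:
  assumes hdp: "hdp xs"
  shows "inj_on (\<lambda>i. (v1 xs i, v2 xs i)) {i. i < length xs \<and> xs ! i = V} \<longleftrightarrow> C_decorated xs"
proof
  assume inj: "inj_on (\<lambda>i. (v1 xs i, v2 xs i)) {i. i < length xs \<and> xs ! i = V}"
  show "C_decorated xs" unfolding C_decorated_def
  proof (intro conjI allI impI hdp)
    fix i j h1 h2
    assume "i < j \<and> j + 2 < length xs \<and> xs ! i = V \<and>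
      xs ! j = H h1 \<and> xs ! (j + 1) = H h2 \<and> xs ! (j + 2) = V"
    then have ij: "i < j" "Suc (Suc j) < length xs" "xs ! i = V"
      and HHV: "xs ! j = H h1" "xs ! Suc j = H h2" "xs ! Suc (Suc j) = V" by auto
    have "(v1 xs i, v2 xs i) \<noteq> (v1 xs (Suc (Suc j)), v2 xs (Suc (Suc j)))"
    proof
      assume "(v1 xs i, v2 xs i) = (v1 xs (Suc (Suc j)), v2 xs (Suc (Suc j)))"
      then have "i = Suc (Suc j)" by (rule inj_onD[OF inj]) (use ij HHV(3) in auto)
      with ij(1) show False by simp
    qed
    then show "(h1, h2) \<noteq> (v1 xs i, v2 xs i)" using v1_v2_HHV[OF hdp ij(2) HHV] by auto
  qed
next
  assume C: "C_decorated xs"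
  show "inj_on (\<lambda>i. (v1 xs i, v2 xs i)) {i. i < length xs \<and> xs ! i = V}"
  proof (rule linorder_inj_onI', clarify)
    fix i i'
    assume i: "i < length xs" "xs ! i = V" and i': "i' < length xs" "xs ! i' = V" "i < i'"
      and same: "v1 xs i = v1 xs i'" "v2 xs i = v2 xs i'"
    then obtain b h1 h2 where HHV: "i < b" "i' = Suc (Suc b)" "xs ! b = H h1" "xs ! Suc b = H h2"
      using repeated_v_pair_ends_HHV[OF hdp i(2) i'] by blast
    then have "i < b \<and> b + 2 < length xs \<and> xs ! i = V \<and>
        xs ! b = H h1 \<and> xs ! (b + 1) = H h2 \<and> xs ! (b + 2) = V"
      using i(2) i' by simp
    then have "(h1, h2) \<noteq> (v1 xs i, v2 xs i)" using C unfolding C_decorated_def by blast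
    moreover have "(v1 xs i', v2 xs i') = (h1, h2)"
      using v1_v2_HHV[OF hdp _ HHV(3,4)] HHV(2) i' by simp
    ultimately show False using same by simp
  qed
qed

lemma compacted_iff_C_decorated: "relaxed t ps \<Longrightarrow> compacted t ps \<longleftrightarrow> C_decorated (Dyck (t, ps))"
  unfolding compacted_def
  by (simp add: Bvals_eq_vertex_values relaxed_iff_hdp_Dyck distinct_vertex_values_iff
      inj_on_v_pairs_iff_C_decorated)

theorem proposition2p10:
  fixes n :: nat
  shows "bij_betw Dyck
           {(t, ps). internal t = n \<and> relaxed t ps \<and> compacted t ps}
           {xs. C_decorated xs \<and> nH xs = n \<and> nV xs = n}"
proof -
  have "bij_betw Dyck
      {C \<in> {(t, ps). internal t = n \<and> relaxed t ps}. compacted (fst C) (snd C)}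
      {xs \<in> {xs. hdp xs \<and> nH xs = n \<and> nV xs = n}. C_decorated xs}"
    by (rule bij_betw_Collect[OF bij_betw_Dyck_relaxed]) (auto simp: compacted_iff_C_decorated)
  moreover have "{C \<in> {(t, ps). internal t = n \<and> relaxed t ps}. compacted (fst C) (snd C)} =
      {(t, ps). internal t = n \<and> relaxed t ps \<and> compacted t ps}" by auto
  moreover have "{xs \<in> {xs. hdp xs \<and> nH xs = n \<and> nV xs = n}. C_decorated xs} =
      {xs. C_decorated xs \<and> nH xs = n \<and> nV xs = n}" by (auto simp: C_decorated_def)
  ultimately show ?thesis by simp
qed

end
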